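(* Let $M,S,a$ be integers with $M+S\ge0$. Then the sum on the left below has only finitely many nonzero terms, and $$\sum_{k\in\mathbb{Z}}q^{k^2+ak}\left[{M\atop a+k}\right]_q^+\left[{S\atop k}\right]_q^+=\left[{M+S\atop S+a}\right]_q .$$
   Context: Let $(q)_n=\prod_{i=1}^n(1-q^i)$. Define $\left[{n\atop m}\right]_q=\frac{(q)_n}{(q)_{n-m}(q)_m}$ if $n\ge m\ge0$ and $0$ otherwise. For all integers $n,m$ set $\left[{n\atop m}\right]_q^+=\left[{n\atop m}\right]_q$ if $n\ge0$, and $\left[{n\atop m}\right]_q^+=(-1)^{n-m}q^{-((n-m)^2+(n-m))/2}\left[{-m-1\atop -n-1}\right]_{q^{-1}}$ if $n<0$. *)

theory Defs
  imports Complex_Main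
begin

definition qpoch :: "'a::field \<Rightarrow> nat \<Rightarrow> 'a" where
  "qpoch q n = (\<Prod>i=1..n. 1 - q ^ i)"

definition qbinom :: "'a::field \<Rightarrow> int \<Rightarrow> int \<Rightarrow> 'a" where
  "qbinom q n m = (if 0 \<le> m \<and> m \<le> n
     then qpoch q (nat n) / (qpoch q (nat (n - m)) * qpoch q (nat m)) else 0)"

definition qbinom_plus :: "'a::field \<Rightarrow> int \<Rightarrow> int \<Rightarrow> 'a" where
  "qbinom_plus q n m = (if 0 \<le> n then qbinom q n m
     else (-1) powi (n - m) * q powi (- (((n - m)^2 + (n - m)) div 2))
          * qbinom (inverse q) (- m - 1) (- n - 1))"

end

theory Submission
  imports Defs
begin

text \<open>
  Both sides of the identity, viewed as functions F(S, a), satisfy the recurrence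
  F(S, a) = q^(S+a) F(S-1, a+1) + F(S-1, a). For the right-hand side this is the q-Pascal rule;
  for the left-hand side it follows by shifting k in the extended Pascal rule
  [S, k]^+ = q^(S-k) [S-1, k-1]^+ + [S-1, k]^+, which holds for every integer S.
  Suppose M >= 0. At S = 0 the sum collapses to [M, a], so induction upwards settles S >= 0.
  Going down from S to S-1, the recurrence expresses the discrepancy at a+1 through the one at a,
  and for a <= -S both sides vanish, so the discrepancy vanishes everywhere.
  If M < 0 then S >= 0, and the substitution k := k - a exchanges the roles of M and S.
\<close>

lemma qpoch_0 [simp]: "qpoch q 0 = 1"
  by (simp add: qpoch_def)

lemma qpoch_Suc: "qpoch q (Suc n) = qpoch q n * (1 - q ^ Suc n)"
  by (simp add: qpoch_def atLeastAtMostSuc_conv mult.commute)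

lemma qpoch_nonzero:
  assumes "\<forall>n::nat. n \<ge> 1 \<longrightarrow> q ^ n \<noteq> 1"
  shows "qpoch q n \<noteq> 0"
  using assms by (auto simp: qpoch_def)

lemma qpoch_pascal:
  assumes nz: "\<forall>n::nat. n \<ge> 1 \<longrightarrow> q ^ n \<noteq> 1"
  shows "qpoch q (a + b + 2) / (qpoch q (a + 1) * qpoch q (b + 1))
    = qpoch q (a + b + 1) / (qpoch q (a + 1) * qpoch q b)
      + q ^ (b + 1) * (qpoch q (a + b + 1) / (qpoch q a * qpoch q (b + 1)))"
proof -
  have top: "qpoch q (a + b + 2)
      = qpoch q (a + b + 1) * ((1 - q ^ (b + 1)) + q ^ (b + 1) * (1 - q ^ (a + 1)))"
    using qpoch_Suc[of q "a + b + 1"] by (simp add: algebra_simps flip: power_add)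
  have bottom: "qpoch q (a + 1) = qpoch q a * (1 - q ^ (a + 1))"
    "qpoch q (b + 1) = qpoch q b * (1 - q ^ (b + 1))"
    using qpoch_Suc by auto
  have "P * (y + c * x) / (A * x * (B * y)) = P / (A * x * B) + c * (P / (A * (B * y)))"
    if "A \<noteq> 0" "B \<noteq> 0" "x \<noteq> 0" "y \<noteq> 0" for P A B x y c :: 'a
    using that by (simp add: field_simps)
  moreover have "1 - q ^ (a + 1) \<noteq> 0" "1 - q ^ (b + 1) \<noteq> 0"
    using nz by auto
  ultimately show ?thesis
    unfolding top bottom using qpoch_nonzero[OF nz] by simp
qed

lemma qbinom_eq_0: "m < 0 \<or> n < m \<Longrightarrow> qbinom q n m = 0"
  by (auto simp: qbinom_def)

lemma qbinom_0_right:
  assumes "\<forall>n::nat. n \<ge> 1 \<longrightarrow> q ^ n \<noteq> 1" and "0 \<le> n"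
  shows "qbinom q n 0 = 1"
  using assms qpoch_nonzero[OF assms(1)] by (simp add: qbinom_def)

lemma qbinom_of_nat: "qbinom q (int (a + b)) (int a) = qpoch q (a + b) / (qpoch q b * qpoch q a)"
  by (simp add: qbinom_def nat_int_add)

lemma qbinom_symmetric: "0 \<le> n \<Longrightarrow> qbinom q n (n - m) = qbinom q n m"
  by (auto simp: qbinom_def mult.commute)

lemma qbinom_self:
  assumes "\<forall>n::nat. n \<ge> 1 \<longrightarrow> q ^ n \<noteq> 1" and "0 \<le> n"
  shows "qbinom q n n = 1"
  using qbinom_symmetric[of n q 0] qbinom_0_right[OF assms] assms(2) by simp

lemma qbinom_pascal:
  assumes nz: "\<forall>n::nat. n \<ge> 1 \<longrightarrow> q ^ n \<noteq> 1" and "1 \<le> n \<or> 1 \<le> k"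
  shows "qbinom q n k = qbinom q (n - 1) k + q powi (n - k) * qbinom q (n - 1) (k - 1)"
proof -
  consider "k < 0 \<or> n < k" | "k = 0" | "k = n" | "1 \<le> k" "k < n"
    using assms(2) by linarith
  then show ?thesis
  proof cases
    case 1
    then show ?thesis by (auto simp: qbinom_eq_0)
  next
    case 2
    then show ?thesis using assms by (simp add: qbinom_0_right qbinom_eq_0)
  next
    case 3
    then show ?thesis
      using assms by (simp add: qbinom_self qbinom_eq_0)
  next
    case 4
    define a b where "a = nat (k - 1)" and "b = nat (n - k - 1)"
    have n: "n = int ((a + 1) + (b + 1))" and k: "k = int (a + 1)"
      using 4 by (auto simp: a_def b_def)
    have "qbinom q n k = qpoch q (a + b + 2) / (qpoch q (a + 1) * qpoch q (b + 1))"
      using qbinom_of_nat[of q "a + 1" "b + 1"] by (simp add: n k ac_simps)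
    moreover have "qbinom q (n - 1) k = qpoch q (a + b + 1) / (qpoch q (a + 1) * qpoch q b)"
      using qbinom_of_nat[of q "a + 1" b] by (simp add: n k ac_simps)
    moreover have "qbinom q (n - 1) (k - 1) = qpoch q (a + b + 1) / (qpoch q a * qpoch q (b + 1))"
      using qbinom_of_nat[of q a "b + 1"] by (simp add: n k ac_simps)
    moreover have "n - k = int (b + 1)"
      by (simp add: n k)
    then have "q powi (n - k) = q ^ (b + 1)"
      by (simp only: power_int_of_nat)
    ultimately show ?thesis
      using qpoch_pascal[OF nz, of a b] by simp
  qed
qed

lemma qbinom_pascal':
  assumes nz: "\<forall>n::nat. n \<ge> 1 \<longrightarrow> q ^ n \<noteq> 1" and "1 \<le> n"
  shows "qbinom q n k = qbinom q (n - 1) (k - 1) + q powi k * qbinom q (n - 1) k"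
  using qbinom_pascal[OF nz, of n "n - k"] assms(2)
    qbinom_symmetric[of n q k] qbinom_symmetric[of "n - 1" q k] qbinom_symmetric[of "n - 1" q "k - 1"]
  by (simp add: algebra_simps)

lemma not_root_of_unity_inverse:
  fixes q :: "'a::field"
  assumes "\<forall>n::nat. n \<ge> 1 \<longrightarrow> q ^ n \<noteq> 1"
  shows "\<forall>n::nat. n \<ge> 1 \<longrightarrow> inverse q ^ n \<noteq> 1"
  using assms by (simp add: power_inverse)

definition reflection_factor :: "'a::field \<Rightarrow> int \<Rightarrow> 'a" where
  "reflection_factor q x = (-1) powi x * q powi (- ((x^2 + x) div 2))"

lemma reflection_factor_0 [simp]: "reflection_factor q 0 = 1"
  by (simp add: reflection_factor_def)

lemma reflection_factor_pred:
  fixes q :: "'a::field"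
  assumes "q \<noteq> 0"
  shows "reflection_factor q (x - 1) = - (q powi x * reflection_factor q x)"
proof -
  have "((x - 1)^2 + (x - 1)) div 2 = (x^2 + x) div 2 - x"
    by (simp add: power2_eq_square algebra_simps)
  then have "q powi (- (((x - 1)^2 + (x - 1)) div 2)) = q powi x * q powi (- ((x^2 + x) div 2))"
    using assms by (simp add: power_int_add flip: power_int_add)
  moreover have "(-1::'a) powi (x - 1) = - ((-1) powi x)"
    by (simp add: power_int_diff)
  ultimately show ?thesis
    by (simp add: reflection_factor_def)
qed

lemma qbinom_plus_nonneg: "0 \<le> n \<Longrightarrow> qbinom_plus q n m = qbinom q n m"
  by (simp add: qbinom_plus_def)

lemma qbinom_plus_neg:
  "n < 0 \<Longrightarrow> qbinom_plus q n m = reflection_factor q (n - m) * qbinom (inverse q) (- m - 1) (- n - 1)"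
  by (simp add: qbinom_plus_def reflection_factor_def)

lemma qbinom_plus_neg_eq_0: "n < 0 \<Longrightarrow> n < m \<Longrightarrow> qbinom_plus q n m = 0"
  by (simp add: qbinom_plus_neg qbinom_eq_0)

lemma qbinom_plus_0_left:
  assumes "\<forall>n::nat. n \<ge> 1 \<longrightarrow> q ^ n \<noteq> 1"
  shows "qbinom_plus q 0 m = (if m = 0 then 1 else 0)"
  using qbinom_self[OF assms, of 0] by (auto simp: qbinom_plus_nonneg qbinom_eq_0 linorder_neq_iff)

lemma qbinom_plus_pascal:
  fixes q :: "'a::field"
  assumes q0: "q \<noteq> 0" and nz: "\<forall>n::nat. n \<ge> 1 \<longrightarrow> q ^ n \<noteq> 1"
  shows "qbinom_plus q n m = q powi (n - m) * qbinom_plus q (n - 1) (m - 1) + qbinom_plus q (n - 1) m"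
proof -
  note nz' = not_root_of_unity_inverse[OF nz]
  consider "1 \<le> n" | "n = 0" | "n < 0"
    by linarith
  then show ?thesis
  proof cases
    case 1
    then show ?thesis
      using qbinom_pascal[OF nz, of n m] by (simp add: qbinom_plus_nonneg)
  next
    case 2
    have binom_0: "qbinom (inverse q) j 0 = (if 0 \<le> j then 1 else 0)" for j
      using qbinom_0_right[OF nz'] by (simp add: qbinom_eq_0)
    note qbinom_plus_0_left[OF nz, of m]
    moreover have "qbinom_plus q (-1) (m - 1) = (if m \<le> 0 then reflection_factor q (- m) else 0)"
      by (simp add: qbinom_plus_neg binom_0)
    moreover have "qbinom_plus q (-1) m
        = (if m < 0 then - (q powi (- m) * reflection_factor q (- m)) else 0)"
    proof -
      have "reflection_factor q (-1 - m) = reflection_factor q (- m - 1)"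
        by (rule arg_cong[where f = "reflection_factor q"]) simp
      also have "\<dots> = - (q powi (- m) * reflection_factor q (- m))"
        by (rule reflection_factor_pred[OF q0])
      finally show ?thesis
        by (simp add: qbinom_plus_neg binom_0)
    qed
    ultimately show ?thesis
      using 2 by auto
  next
    case 3
    define R where "R = reflection_factor q (n - m)"
    have "qbinom_plus q n m = R * qbinom (inverse q) (- m - 1) (- n - 1)"
      using 3 by (simp add: qbinom_plus_neg R_def)
    moreover have "qbinom_plus q (n - 1) (m - 1) = R * qbinom (inverse q) (- m) (- n)"
      using 3 by (simp add: qbinom_plus_neg R_def)
    moreover have "qbinom_plus q (n - 1) m = - (q powi (n - m) * R) * qbinom (inverse q) (- m - 1) (- n)"
    proof -
      have "reflection_factor q (n - 1 - m) = reflection_factor q (n - m - 1)"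
        by (rule arg_cong[where f = "reflection_factor q"]) simp
      then show ?thesis
        using 3 reflection_factor_pred[OF q0, of "n - m"] by (simp add: qbinom_plus_neg R_def)
    qed
    moreover have "qbinom (inverse q) (- m) (- n)
        = qbinom (inverse q) (- m - 1) (- n) + inverse (q powi (n - m)) * qbinom (inverse q) (- m - 1) (- n - 1)"
      using qbinom_pascal[OF nz', of "- m" "- n"] 3 by (simp add: power_int_inverse)
    ultimately show ?thesis
      using q0 by (simp add: algebra_simps)
  qed
qed

definition vandermonde_term :: "'a::field \<Rightarrow> int \<Rightarrow> int \<Rightarrow> int \<Rightarrow> int \<Rightarrow> 'a" where
  "vandermonde_term q M S a k = q powi (k^2 + a * k) * qbinom_plus q M (a + k) * qbinom_plus q S k"

text \<open>For M >= 0 the window -a..M-a contains the support of the summand.\<close>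

definition vandermonde_sum :: "'a::field \<Rightarrow> int \<Rightarrow> int \<Rightarrow> int \<Rightarrow> 'a" where
  "vandermonde_sum q M S a = (\<Sum>k = -a..M - a. vandermonde_term q M S a k)"

lemma vandermonde_term_rec:
  fixes q :: "'a::field"
  assumes q0: "q \<noteq> 0" and nz: "\<forall>n::nat. n \<ge> 1 \<longrightarrow> q ^ n \<noteq> 1"
  shows "vandermonde_term q M S a k
    = q powi (S + a) * vandermonde_term q M (S - 1) (a + 1) (k - 1) + vandermonde_term q M (S - 1) a k"
proof -
  have "k^2 + a * k + (S - k) = (S + a) + ((k - 1)^2 + (a + 1) * (k - 1))"
    by (simp add: power2_eq_square algebra_simps)
  then have "q powi (k^2 + a * k) * q powi (S - k) = q powi (S + a) * q powi ((k - 1)^2 + (a + 1) * (k - 1))"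
    using q0 by (metis power_int_add)
  then show ?thesis
    unfolding vandermonde_term_def qbinom_plus_pascal[OF q0 nz, of S k]
    by (simp add: algebra_simps)
qed

lemma vandermonde_sum_rec:
  fixes q :: "'a::field"
  assumes q0: "q \<noteq> 0" and nz: "\<forall>n::nat. n \<ge> 1 \<longrightarrow> q ^ n \<noteq> 1"
  shows "vandermonde_sum q M S a
    = q powi (S + a) * vandermonde_sum q M (S - 1) (a + 1) + vandermonde_sum q M (S - 1) a"
proof -
  have "(\<Sum>k = -a..M - a. vandermonde_term q M (S - 1) (a + 1) (k - 1))
      = (\<Sum>j = -(a + 1)..M - (a + 1). vandermonde_term q M (S - 1) (a + 1) j)"
    by (rule sum.reindex_bij_witness[of _ "\<lambda>j. j + 1" "\<lambda>k. k - 1"]) auto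
  then show ?thesis
    unfolding vandermonde_sum_def vandermonde_term_rec[OF q0 nz, of M S a]
    by (simp add: sum.distrib flip: sum_distrib_left)
qed

lemma vandermonde_sum_0:
  assumes nz: "\<forall>n::nat. n \<ge> 1 \<longrightarrow> q ^ n \<noteq> 1" and M: "0 \<le> M"
  shows "vandermonde_sum q M 0 a = qbinom q M a"
proof -
  have "vandermonde_sum q M 0 a = (\<Sum>k = -a..M - a. if k = 0 then qbinom_plus q M a else 0)"
    unfolding vandermonde_sum_def vandermonde_term_def qbinom_plus_0_left[OF nz] by (rule sum.cong) auto
  also have "\<dots> = qbinom q M a"
    using M by (auto simp: qbinom_plus_nonneg qbinom_eq_0)
  finally show ?thesis .
qed

lemma vandermonde_sum_eq_nonneg:
  fixes q :: "'a::field"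
  assumes q0: "q \<noteq> 0" and nz: "\<forall>n::nat. n \<ge> 1 \<longrightarrow> q ^ n \<noteq> 1"
    and M: "0 \<le> M" and "0 \<le> S"
  shows "vandermonde_sum q M S a = qbinom q (M + S) (S + a)"
  using \<open>0 \<le> S\<close>
proof (induction S arbitrary: a rule: int_ge_induct)
  case base
  then show ?case
    using vandermonde_sum_0[OF nz M] by simp
next
  case (step S)
  have "vandermonde_sum q M (S + 1) a
      = q powi (S + 1 + a) * vandermonde_sum q M S (a + 1) + vandermonde_sum q M S a"
    using vandermonde_sum_rec[OF q0 nz, of M "S + 1" a] by simp
  also have "\<dots> = q powi (S + 1 + a) * qbinom q (M + S) (S + 1 + a) + qbinom q (M + S) (S + a)"
    using step.IH by (simp add: algebra_simps)
  also have "\<dots> = qbinom q (M + (S + 1)) (S + 1 + a)"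
    using qbinom_pascal'[OF nz, of "M + S + 1" "S + 1 + a"] M step.hyps by (simp add: algebra_simps)
  finally show ?case .
qed

lemma vandermonde_sum_eq_pred:
  fixes q :: "'a::field"
  assumes q0: "q \<noteq> 0" and nz: "\<forall>n::nat. n \<ge> 1 \<longrightarrow> q ^ n \<noteq> 1"
    and MS: "1 \<le> M + S" and S: "S \<le> 0"
    and eq: "\<And>a. vandermonde_sum q M S a = qbinom q (M + S) (S + a)"
  shows "vandermonde_sum q M (S - 1) a = qbinom q (M + S - 1) (S - 1 + a)"
proof -
  define d where "d a = vandermonde_sum q M (S - 1) a - qbinom q (M + S - 1) (S - 1 + a)" for a
  have d_rec: "d a + q powi (S + a) * d (a + 1) = 0" for a
    using vandermonde_sum_rec[OF q0 nz, of M S a] eq[of a] qbinom_pascal'[OF nz MS, of "S + a"]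
    by (simp add: d_def algebra_simps)
  have d_low: "d a = 0" if "a \<le> - S" for a
  proof -
    have "vandermonde_term q M (S - 1) a k = 0" if "k \<in> {-a..M - a}" for k
      using qbinom_plus_neg_eq_0[of "S - 1" k q] that \<open>a \<le> - S\<close> S
      by (simp add: vandermonde_term_def)
    moreover have "qbinom q (M + S - 1) (S - 1 + a) = 0"
      using \<open>a \<le> - S\<close> by (simp add: qbinom_eq_0)
    ultimately show ?thesis
      by (simp add: d_def vandermonde_sum_def)
  qed
  have "d a = 0"
  proof (cases "a \<le> - S")
    case False
    then have "- S \<le> a" by simp
    then show ?thesis
    proof (induction a rule: int_ge_induct)
      case (step a)
      then show ?case using d_rec[of a] q0 by simp
    qed (simp add: d_low)
  qed (rule d_low)
  then show ?thesis
    by (simp add: d_def)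
qed

lemma vandermonde_sum_eq:
  fixes q :: "'a::field"
  assumes q0: "q \<noteq> 0" and nz: "\<forall>n::nat. n \<ge> 1 \<longrightarrow> q ^ n \<noteq> 1"
    and M: "0 \<le> M" and MS: "0 \<le> M + S"
  shows "vandermonde_sum q M S a = qbinom q (M + S) (S + a)"
proof (cases "0 \<le> S")
  case True
  then show ?thesis
    by (rule vandermonde_sum_eq_nonneg[OF q0 nz M])
next
  case False
  then have "S \<le> 0" by simp
  then have "0 \<le> M + S \<longrightarrow> (\<forall>a. vandermonde_sum q M S a = qbinom q (M + S) (S + a))"
  proof (induction S rule: int_le_induct)
    case base
    then show ?case
      using vandermonde_sum_eq_nonneg[OF q0 nz M] by simp
  next
    case (step S)
    then show ?case
      using vandermonde_sum_eq_pred[OF q0 nz, of M S] by (auto simp: algebra_simps)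
  qed
  then show ?thesis
    using MS by blast
qed

lemma vandermonde_term_swap: "vandermonde_term q M S a k = vandermonde_term q S M (- a) (a + k)"
proof -
  have "(a + k)^2 + - a * (a + k) = k^2 + a * k"
    by (simp add: power2_eq_square algebra_simps)
  then show ?thesis
    by (simp add: vandermonde_term_def mult.commute mult.left_commute)
qed

lemma vandermonde_support_sum_nonneg:
  fixes q :: "'a::field" and M S a :: int
  assumes q0: "q \<noteq> 0" and nz: "\<forall>n::nat. n \<ge> 1 \<longrightarrow> q ^ n \<noteq> 1"
    and M: "0 \<le> M" and MS: "0 \<le> M + S"
  defines "K \<equiv> {k. vandermonde_term q M S a k \<noteq> 0}"
  shows "finite K \<and> sum (vandermonde_term q M S a) K = qbinom q (M + S) (S + a)"
proof
  have "k \<in> {-a..M - a}" if "qbinom_plus q M (a + k) \<noteq> 0" for k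
    using that M by (auto simp: qbinom_plus_nonneg qbinom_def split: if_splits)
  then have K: "K \<subseteq> {-a..M - a}"
    by (auto simp: K_def vandermonde_term_def)
  then show "finite K"
    by (rule finite_subset) simp
  have "sum (vandermonde_term q M S a) K = vandermonde_sum q M S a"
    unfolding vandermonde_sum_def by (rule sum.mono_neutral_left) (use K in \<open>auto simp: K_def\<close>)
  then show "sum (vandermonde_term q M S a) K = qbinom q (M + S) (S + a)"
    using vandermonde_sum_eq[OF q0 nz M MS] by simp
qed

lemma vandermonde_support_sum:
  fixes q :: "'a::field" and M S a :: int
  assumes q0: "q \<noteq> 0" and nz: "\<forall>n::nat. n \<ge> 1 \<longrightarrow> q ^ n \<noteq> 1" and MS: "0 \<le> M + S"
  defines "K \<equiv> {k. vandermonde_term q M S a k \<noteq> 0}"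
  shows "finite K \<and> sum (vandermonde_term q M S a) K = qbinom q (M + S) (S + a)"
proof (cases "0 \<le> M")
  case True
  then show ?thesis
    unfolding K_def by (rule vandermonde_support_sum_nonneg[OF q0 nz _ MS])
next
  case False
  define K' where "K' = {j. vandermonde_term q S M (- a) j \<noteq> 0}"
  have swapped: "finite K' \<and> sum (vandermonde_term q S M (- a)) K' = qbinom q (S + M) (M - a)"
    unfolding K'_def using False MS vandermonde_support_sum_nonneg[OF q0 nz, of S M "- a"] by simp
  have K: "K = (\<lambda>j. j - a) ` K'"
    by (force simp: K_def K'_def vandermonde_term_swap[of q M S a])
  have "sum (vandermonde_term q M S a) K = sum (vandermonde_term q S M (- a)) K'"
    unfolding K by (subst sum.reindex) (auto simp: inj_on_def vandermonde_term_swap[of q M S a])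
  moreover have "qbinom q (S + M) (M - a) = qbinom q (M + S) (S + a)"
    using qbinom_symmetric[of "M + S" q "S + a"] MS by (simp add: algebra_simps)
  ultimately show ?thesis
    using swapped K by simp
qed

theorem mainTheorem6:
  fixes q :: "'a::field" and M S a :: int
  assumes "q \<noteq> 0" and "\<forall>n::nat. n \<ge> 1 \<longrightarrow> q ^ n \<noteq> 1"
    and "M + S \<ge> 0"
  shows "finite {k::int. q powi (k^2 + a*k) * qbinom_plus q M (a + k) * qbinom_plus q S k \<noteq> 0}
    \<and> (\<Sum>k\<in>{k::int. q powi (k^2 + a*k) * qbinom_plus q M (a + k) * qbinom_plus q S k \<noteq> 0}.
          q powi (k^2 + a*k) * qbinom_plus q M (a + k) * qbinom_plus q S k)
       = qbinom_plus q (M + S) (S + a)"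
  using vandermonde_support_sum[OF assms, of a] assms(3)
  by (simp add: vandermonde_term_def qbinom_plus_nonneg)

end
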